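(* Consider a mean-variance team stochastic game as described in the context. Let $\boldsymbol{\mu},\boldsymbol{\mu}'\in\mathcal{U}$ and define $\mathcal{L}_f^{\boldsymbol{\mu}}(\boldsymbol{\mu}')=\mathbb{E}_{s\sim\pi^{\boldsymbol{\mu}},\boldsymbol{a}\sim\boldsymbol{\mu}'(\cdot|s)}[A_f^{\boldsymbol{\mu}}(s,\boldsymbol{a})]$, $\mathcal{L}^{\boldsymbol{\mu}}(\boldsymbol{\mu}')=\mathbb{E}_{s\sim\pi^{\boldsymbol{\mu}},\boldsymbol{a}\sim\boldsymbol{\mu}'(\cdot|s)}[A^{\boldsymbol{\mu}}(s,\boldsymbol{a})]$, $\epsilon_f=\max_s|\mathbb{E}_{\boldsymbol{a}\sim\boldsymbol{\mu}'(\cdot|s)}[A_f^{\boldsymbol{\mu}}(s,\boldsymbol{a})]|$, $\epsilon_\eta=\max_s|\mathbb{E}_{\boldsymbol{a}\sim\boldsymbol{\mu}'(\cdot|s)}[A^{\boldsymbol{\mu}}(s,\boldsymbol{a})]|$, and $H=\max\big(0,\ \mathcal{L}^{\boldsymbol{\mu}}(\boldsymbol{\mu}')-2(\kappa^*-1)\epsilon_\eta D_{\mathrm{TV}}(\boldsymbol{\mu}',\boldsymbol{\mu}),\ -\mathcal{L}^{\boldsymbol{\mu}}(\boldsymbol{\mu}')-2(\kappa^*-1)\epsilon_\eta D_{\mathrm{TV}}(\boldsymbol{\mu}',\boldsymbol{\mu})\big)$. Then $$J(\boldsymbol{\mu}')-J(\boldsymbol{\mu})\ge\mathcal{L}_f^{\boldsymbol{\mu}}(\boldsymbol{\mu}')-2(\kappa^*-1)\epsilon_fD_{\mathrm{TV}}(\boldsymbol{\mu}',\boldsymbol{\mu})+\beta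 H^2 .$$
   Context: Game: finite agents $\mathcal{N}=\{1,\dots,N\}$, finite state space $\mathcal{S}$, finite action sets $\mathcal{A}_i$, $\mathcal{A}=\prod_i\mathcal{A}_i$, transition kernel $P(s'|s,\boldsymbol{a})$, common reward $r:\mathcal{S}\times\mathcal{A}\to\mathbb{R}$. Policies $\mu_i:\mathcal{S}\to\Delta(\mathcal{A}_i)$ (set $\mathcal{U}_i$); joint policies $\boldsymbol{\mu}\in\mathcal{U}=\prod_i\mathcal{U}_i$ with $\boldsymbol{\mu}(\boldsymbol{a}|s)=\prod_i\mu_i(a_i|s)$. Standing assumption: the chain $P^{\boldsymbol{\mu}}(s'|s)=\sum_{\boldsymbol{a}}\boldsymbol{\mu}(\boldsymbol{a}|s)P(s'|s,\boldsymbol{a})$ is ergodic for every $\boldsymbol{\mu}\in\mathcal{U}$, stationary distribution $\pi^{\boldsymbol{\mu}}$. $\eta^{\boldsymbol{\mu}}=\sum_s\pi^{\boldsymbol{\mu}}(s)\sum_{\boldsymbol{a}}\boldsymbol{\mu}(\boldsymbol{a}|s)r(s,\boldsymbol{a})$; $\zeta^{\boldsymbol{\mu}}=\sum_s\pi^{\boldsymbol{\mu}}(s)\sum_{\boldsymbol{a}}\boldsymbol{\mu}(\boldsymbol{a}|s)(r(s,\boldsymbol{a})-\eta^{\boldsymbol{\mu}})^2$; for fixed $\beta\ge0$, $J(\boldsymbol{\mu})=\eta^{\boldsymbol{\mu}}-\beta\zeta^{\boldsymbol{\mu}}$. For a per-step reward $g$ (either $g=r$ with average $\eta^{\boldsymbol{\mu}}$,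 or $g=f^{\boldsymbol{\mu}}$ with $f^{\boldsymbol{\mu}}(s,\boldsymbol{a})=r(s,\boldsymbol{a})-\beta(r(s,\boldsymbol{a})-\eta^{\boldsymbol{\mu}})^2$ and average $J(\boldsymbol{\mu})$), let $\bar g$ be its stationary average, $V$ a solution of $V(s)=\sum_{\boldsymbol{a}}\boldsymbol{\mu}(\boldsymbol{a}|s)g(s,\boldsymbol{a})-\bar g+\sum_{s'}P^{\boldsymbol{\mu}}(s'|s)V(s')$ (unique up to an additive constant), $Q(s,\boldsymbol{a})=g(s,\boldsymbol{a})-\bar g+\sum_{s'}P(s'|s,\boldsymbol{a})V(s')$ and advantage $Q-V$. $A^{\boldsymbol{\mu}}$ denotes this advantage for $g=r$ (average-reward advantage) and $A_f^{\boldsymbol{\mu}}$ for $g=f^{\boldsymbol{\mu}}$. $D_{\mathrm{TV}}(\boldsymbol{\mu}',\boldsymbol{\mu})=\mathbb{E}_{s\sim\pi^{\boldsymbol{\mu}}}\big[\tfrac12\sum_{\boldsymbol{a}}|\boldsymbol{\mu}'(\boldsymbol{a}|s)-\boldsymbol{\mu}(\boldsymbol{a}|s)|\big]$. $\kappa^{\boldsymbol{\mu}}$ is Kemeny's constant of the chain $P^{\boldsymbol{\mu}}$, taken as the trace of the fundamental matrix $(I-P^{\boldsymbol{\mu}}+\boldsymbol{e}\pi^{\boldsymbol{\mu}})^{-1}$ (equivalently $\sum_{s'}\pi^{\boldsymbol{\mu}}(s')m^{\boldsymbol{\mu}}(s,s')$ with $m^{\boldsymbol{\mu}}(s,s')$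 the mean first time $t\ge1$ to reach $s'$ from $s$), and $\kappa^*=\max_{\boldsymbol{\mu}\in\mathcal{U}}\kappa^{\boldsymbol{\mu}}$. *)

theory Defs
  imports "HOL-Analysis.Analysis"
begin

text \<open>Every agent draws its actions from a common finite type 'act, restricted to its own
  action set A i.
  P s a s' is the transition kernel, r s a the common reward.
  A (product) policy is mu :: 'i => 's => 'act => real, mu i s being a distribution on A i.\<close>

definition joint_actions :: "('i \<Rightarrow> 'act set) \<Rightarrow> ('i \<Rightarrow> 'act) set" where
  "joint_actions A = {a. \<forall>i. a i \<in> A i}"

definition valid_game ::
  "('i::finite \<Rightarrow> 'act::finite set) \<Rightarrow> ('s::finite \<Rightarrow> ('i \<Rightarrow> 'act) \<Rightarrow> 's \<Rightarrow> real) \<Rightarrow> bool" where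
  "valid_game A P \<longleftrightarrow> (\<forall>i. A i \<noteq> {}) \<and>
     (\<forall>s a s'. a \<in> joint_actions A \<longrightarrow> 0 \<le> P s a s') \<and>
     (\<forall>s a. a \<in> joint_actions A \<longrightarrow> (\<Sum>s'\<in>UNIV. P s a s') = 1)"

definition policies :: "('i::finite \<Rightarrow> 'act::finite set) \<Rightarrow> ('i \<Rightarrow> 's::finite \<Rightarrow> 'act \<Rightarrow> real) set" where
  "policies A = {mu. \<forall>i s. (\<forall>x. 0 \<le> mu i s x) \<and> (\<forall>x. x \<notin> A i \<longrightarrow> mu i s x = 0)
                        \<and> (\<Sum>x\<in>A i. mu i s x) = 1}"

definition jpol :: "('i::finite \<Rightarrow> 's \<Rightarrow> 'act \<Rightarrow> real) \<Rightarrow> 's \<Rightarrow> ('i \<Rightarrow> 'act) \<Rightarrow> real" where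
  "jpol mu s a = (\<Prod>i\<in>UNIV. mu i s (a i))"

definition Pmu :: "('s::finite \<Rightarrow> ('i::finite \<Rightarrow> 'act::finite) \<Rightarrow> 's \<Rightarrow> real)
     \<Rightarrow> ('i \<Rightarrow> 's \<Rightarrow> 'act \<Rightarrow> real) \<Rightarrow> 's \<Rightarrow> 's \<Rightarrow> real" where
  "Pmu P mu s s' = (\<Sum>a\<in>UNIV. jpol mu s a * P s a s')"

fun mpow :: "('s::finite \<Rightarrow> 's \<Rightarrow> real) \<Rightarrow> nat \<Rightarrow> 's \<Rightarrow> 's \<Rightarrow> real" where
  "mpow M 0 = (\<lambda>s s'. if s = s' then 1 else 0)"
| "mpow M (Suc n) = (\<lambda>s s'. \<Sum>t\<in>UNIV. mpow M n s t * M t s')"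

text \<open>Ergodic (finite chain, Kemeny--Snell sense): irreducible.\<close>
definition ergodic :: "('s::finite \<Rightarrow> 's \<Rightarrow> real) \<Rightarrow> bool" where
  "ergodic M \<longleftrightarrow> (\<forall>s s'. \<exists>n>0. mpow M n s s' > 0)"

definition is_stationary :: "('s::finite \<Rightarrow> 's \<Rightarrow> real) \<Rightarrow> ('s \<Rightarrow> real) \<Rightarrow> bool" where
  "is_stationary M p \<longleftrightarrow> (\<forall>s. 0 \<le> p s) \<and> (\<Sum>s\<in>UNIV. p s) = 1 \<and> (\<forall>s'. (\<Sum>s\<in>UNIV. p s * M s s') = p s')"

definition stat_dist :: "('s::finite \<Rightarrow> 's \<Rightarrow> real) \<Rightarrow> 's \<Rightarrow> real" where
  "stat_dist M = (THE p. is_stationary M p)"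

definition pi_mu where "pi_mu P mu = stat_dist (Pmu P mu)"

definition avg where
  "avg P mu g = (\<Sum>s\<in>UNIV. pi_mu P mu s * (\<Sum>a\<in>UNIV. jpol mu s a * g s a))"

definition eta where "eta P r mu = avg P mu r"

definition zeta where
  "zeta P r mu = avg P mu (\<lambda>s a. (r s a - eta P r mu)\<^sup>2)"

definition Jobj where "Jobj beta P r mu = eta P r mu - beta * zeta P r mu"

definition fmu where
  "fmu beta P r mu = (\<lambda>s a. r s a - beta * (r s a - eta P r mu)\<^sup>2)"

text \<open>relative value function: a solution of the Poisson equation (unique up to a constant)\<close>
definition Vfun where
  "Vfun P mu g gbar = (SOME V. \<forall>s. V s = (\<Sum>a\<in>UNIV. jpol mu s a * g s a) - gbar + (\<Sum>s'\<in>UNIV. Pmu P mu s s' * V s'))"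

definition Qfun where
  "Qfun P mu g gbar = (\<lambda>s a. g s a - gbar + (\<Sum>s'\<in>UNIV. P s a s' * Vfun P mu g gbar s'))"

definition advantage where
  "advantage P mu g gbar = (\<lambda>s a. Qfun P mu g gbar s a - Vfun P mu g gbar s)"

definition Adv :: "_ \<Rightarrow> _ \<Rightarrow> _ \<Rightarrow> 's::finite \<Rightarrow> ('i::finite \<Rightarrow> 'act::finite) \<Rightarrow> real" where
  "Adv P r mu = advantage P mu r (eta P r mu)"

definition Adv_f :: "real \<Rightarrow> _ \<Rightarrow> _ \<Rightarrow> _ \<Rightarrow> 's::finite \<Rightarrow> ('i::finite \<Rightarrow> 'act::finite) \<Rightarrow> real" where
  "Adv_f beta P r mu = advantage P mu (fmu beta P r mu) (Jobj beta P r mu)"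

definition DTV where
  "DTV P mu' mu = (\<Sum>s\<in>UNIV. pi_mu P mu s * (1/2 * (\<Sum>a\<in>UNIV. \<bar>jpol mu' s a - jpol mu s a\<bar>)))"

text \<open>Kemeny's constant: trace of the fundamental matrix (I - P + e pi)^{-1}\<close>
definition kemeny_chain :: "('s::finite \<Rightarrow> 's \<Rightarrow> real) \<Rightarrow> real" where
  "kemeny_chain M = trace (matrix_inv
     ((\<chi> i j. (if i = j then 1 else 0) - M i j + stat_dist M j) :: real^'s^'s))"

definition kemeny where "kemeny P mu = kemeny_chain (Pmu P mu)"

definition kemeny_star where
  "kemeny_star A P = (SUP mu\<in>policies A. kemeny P mu)"

definition surr where
  "surr P mu mu' Ad = (\<Sum>s\<in>UNIV. pi_mu P mu s * (\<Sum>a\<in>UNIV. jpol mu' s a * Ad s a))"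

definition epsmax :: "_ \<Rightarrow> ('s::finite \<Rightarrow> _ \<Rightarrow> real) \<Rightarrow> real" where
  "epsmax mu' Ad = Max (range (\<lambda>s. \<bar>\<Sum>a\<in>UNIV. jpol mu' s a * Ad s a\<bar>))"

end

theory Submission
  imports Defs
begin

(* For a per-step reward g, the performance-difference identity writes avg_{mu'} g - avg_mu g as the
   average of G(s) = E_{a ~ mu'(.|s)} [A(s,a)] under the stationary distribution of mu', whereas the
   surrogate averages G under the stationary distribution of mu. Expressing the difference of the two
   stationary distributions through the fundamental matrix Z = (I - P^{mu'} + e pi^{mu'})^{-1}, and
   using Z_jk <= Z_kk (a minimum principle), bounds the error by
   ||pi^mu (P^{mu'} - P^mu)||_1 (kappa^{mu'} - 1) max |G| <= 2 D_TV (kappa* - 1) eps.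
   For g = f^mu one has avg_{mu'} f^mu = J(mu') - beta (eta' - eta)^2, which gives the first two terms
   of the bound; for g = r the same estimate shows |eta' - eta| >= H. As kappa* is a supremum, the
   Kemeny constants must be bounded uniformly over policies: Z_kk - Z_jk is controlled along a path to
   k of the deterministic policy choosing a most likely joint action, on which P^mu is bounded below. *)

definition stochastic :: "('s::finite \<Rightarrow> 's \<Rightarrow> real) \<Rightarrow> bool" where
  "stochastic M \<longleftrightarrow> (\<forall>i j. 0 \<le> M i j) \<and> (\<forall>i. (\<Sum>j\<in>UNIV. M i j) = 1)"

lemma stochastic_nonneg: "stochastic M \<Longrightarrow> 0 \<le> M i j"
  by (simp add: stochastic_def)

lemma stochastic_row_sum: "stochastic M \<Longrightarrow> (\<Sum>j\<in>UNIV. M i j) = 1"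
  by (simp add: stochastic_def)

lemma stochastic_average_const: "stochastic M \<Longrightarrow> (\<Sum>j\<in>UNIV. M i j * c) = c"
  by (simp add: sum_distrib_right[symmetric] stochastic_row_sum)

lemma sum_mult_sum_swap:
  fixes a :: "'i \<Rightarrow> 'a::comm_semiring_0"
  shows "(\<Sum>i\<in>I. a i * (\<Sum>j\<in>J. b i j * c j)) = (\<Sum>j\<in>J. (\<Sum>i\<in>I. a i * b i j) * c j)"
  by (simp add: sum_distrib_left sum_distrib_right mult.assoc) (rule sum.swap)

lemma finite_ex_max:
  fixes x :: "'s::finite \<Rightarrow> real"
  obtains i0 where "\<And>j. x j \<le> x i0"
proof -
  have "Max (range x) \<in> range x" by (rule Max_in) auto
  then obtain i0 where "Max (range x) = x i0" by (rule imageE)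
  moreover have "x j \<le> Max (range x)" for j by (rule Max_ge) auto
  ultimately show thesis using that by metis
qed

lemma mpow_nonneg: "(\<And>i j. 0 \<le> M i j) \<Longrightarrow> 0 \<le> mpow M n i j"
  by (induction n arbitrary: j) (auto intro!: sum_nonneg)

lemma mpow_Suc_pos_obtain:
  assumes nonneg: "\<And>i j. 0 \<le> M i j" and pos: "mpow M (Suc n) i j > 0"
  obtains t where "mpow M n i t > 0" and "M t j > 0"
proof -
  have "\<exists>t. mpow M n i t * M t j > 0"
  proof (rule ccontr)
    assume "\<not> ?thesis"
    then have "(\<Sum>t\<in>UNIV. mpow M n i t * M t j) \<le> 0" by (simp add: sum_nonpos not_less)
    with pos show False by simp
  qed
  then show thesis
    using that mpow_nonneg[of M, OF nonneg, of n i] nonneg by (metis less_eq_real_def mult_eq_0_iff)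
qed

lemma mpow_pos_closed:
  assumes nonneg: "\<And>i j. 0 \<le> M i j" and "i0 \<in> S"
    and closed: "\<And>i j. i \<in> S \<Longrightarrow> M i j > 0 \<Longrightarrow> j \<in> S"
  shows "mpow M n i0 j > 0 \<Longrightarrow> j \<in> S"
proof (induction n arbitrary: j)
  case 0
  then show ?case using \<open>i0 \<in> S\<close> by (auto split: if_splits)
next
  case (Suc n)
  then obtain t where "mpow M n i0 t > 0" "M t j > 0" using mpow_Suc_pos_obtain[of M, OF nonneg] by blast
  then show ?case using Suc.IH closed by blast
qed

lemma ergodic_closed_set_eq_UNIV:
  assumes "\<And>i j. 0 \<le> M i j" and "ergodic M" and "i0 \<in> S"
    and "\<And>i j. i \<in> S \<Longrightarrow> M i j > 0 \<Longrightarrow> j \<in> S"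
  shows "j \<in> S"
proof -
  obtain n where "mpow M n i0 j > 0" using \<open>ergodic M\<close> unfolding ergodic_def by blast
  then show ?thesis using mpow_pos_closed[of M i0 S n j] assms by blast
qed

text \<open>Strong maximum principle: the set where \<open>x\<close> is maximal is closed under transitions out of
  states not in \<open>K\<close> (a convex combination with a positive weight below the maximum would fall below
  it), so by ergodicity it is everything unless it meets \<open>K\<close>.\<close>
lemma ergodic_subharmonic_max:
  assumes M: "stochastic M" "ergodic M"
    and sub: "\<And>i. i \<notin> K \<Longrightarrow> x i \<le> (\<Sum>j\<in>UNIV. M i j * x j)"
    and max: "\<And>j. x j \<le> x i0"
    and disj: "\<And>k. k \<in> K \<Longrightarrow> x k \<noteq> x i0"
  shows "x j = x i0"
proof -
  let ?S = "{i. x i = x i0}"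
  have "j' \<in> ?S" if "i \<in> ?S" and "M i j' > 0" for i j'
  proof (rule ccontr)
    assume "j' \<notin> ?S"
    then have "M i j' * x j' < M i j' * x i0" using max[of j'] \<open>M i j' > 0\<close> by simp
    have "i \<notin> K" using that(1) disj by auto
    then have "x i \<le> (\<Sum>j\<in>UNIV. M i j * x j)" by (rule sub)
    also have "\<dots> < (\<Sum>j\<in>UNIV. M i j * x i0)"
      using max stochastic_nonneg[OF M(1)] \<open>M i j' * x j' < M i j' * x i0\<close>
      by (intro sum_strict_mono_ex1) (auto intro: mult_left_mono)
    also have "\<dots> = x i" using that(1) stochastic_average_const[OF M(1)] by simp
    finally show False by simp
  qed
  then show ?thesis
    using ergodic_closed_set_eq_UNIV[of M i0 ?S j] stochastic_nonneg[OF M(1)] M(2) by blast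
qed

lemma ergodic_harmonic_const:
  assumes M: "stochastic M" "ergodic M" and harm: "\<And>i. x i = (\<Sum>j\<in>UNIV. M i j * x j)"
  shows "x i = x j"
proof -
  obtain i0 where max: "\<And>j. x j \<le> x i0" using finite_ex_max by blast
  have "x k = x i0" for k
    using ergodic_subharmonic_max[OF M, of "{}" x i0] eq_refl[OF harm] max by blast
  then show ?thesis by (metis)
qed

lemma ergodic_min_principle:
  assumes M: "stochastic M" "ergodic M" and "w k = 0" and "0 \<le> c"
    and eq: "\<And>i. i \<noteq> k \<Longrightarrow> w i = c + (\<Sum>j\<in>UNIV. M i j * w j)"
  shows "0 \<le> w i"
proof -
  obtain i0 where max: "\<And>j. - w j \<le> - w i0" using finite_ex_max[of "\<lambda>j. - w j"] by blast
  have sub: "- w i \<le> (\<Sum>j\<in>UNIV. M i j * - w j)" if "i \<notin> {k}" for i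
    using eq[of i] that \<open>0 \<le> c\<close> by (simp add: sum_negf)
  have "w k = w i0"
  proof (rule ccontr)
    assume ne: "w k \<noteq> w i0"
    have "- w k = - w i0" by (rule ergodic_subharmonic_max[OF M sub max]) (use ne in auto)
    with ne show False by simp
  qed
  then show ?thesis using max[of i] \<open>w k = 0\<close> by simp
qed

section \<open>Stationary distribution of an ergodic chain\<close>

definition mat_of :: "('s::finite \<Rightarrow> 's \<Rightarrow> real) \<Rightarrow> real^'s^'s" where
  "mat_of B = (\<chi> i j. B i j)"

lemma invertible_mat_of_iff_right_kernel:
  fixes B :: "'s::finite \<Rightarrow> 's \<Rightarrow> real"
  shows "invertible (mat_of B) \<longleftrightarrow> (\<forall>x. (\<forall>i. (\<Sum>j\<in>UNIV. B i j * x j) = 0) \<longrightarrow> (\<forall>j. x j = 0))"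
proof -
  have mult: "mat_of B *v v = 0 \<longleftrightarrow> (\<forall>i. (\<Sum>j\<in>UNIV. B i j * v $ j) = 0)" for v
    by (simp add: vec_eq_iff matrix_vector_mult_def mat_of_def)
  have "invertible (mat_of B) \<longleftrightarrow> (\<forall>v. mat_of B *v v = 0 \<longrightarrow> v = 0)"
    by (simp add: invertible_left_inverse matrix_left_invertible_ker)
  also have "\<dots> \<longleftrightarrow> (\<forall>x. (\<forall>i. (\<Sum>j\<in>UNIV. B i j * x j) = 0) \<longrightarrow> (\<forall>j. x j = 0))"
  proof
    assume ker: "\<forall>v. mat_of B *v v = 0 \<longrightarrow> v = 0"
    show "\<forall>x. (\<forall>i. (\<Sum>j\<in>UNIV. B i j * x j) = 0) \<longrightarrow> (\<forall>j. x j = 0)"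
    proof (intro allI impI)
      fix x j assume "\<forall>i. (\<Sum>j\<in>UNIV. B i j * x j) = 0"
      then have "(\<chi> j. x j) = 0" using ker mult[of "\<chi> j. x j"] by simp
      then show "x j = 0" by (metis vec_lambda_beta zero_index)
    qed
  next
    assume "\<forall>x. (\<forall>i. (\<Sum>j\<in>UNIV. B i j * x j) = 0) \<longrightarrow> (\<forall>j. x j = 0)"
    then show "\<forall>v. mat_of B *v v = 0 \<longrightarrow> v = 0"
      using mult by (auto simp: vec_eq_iff)
  qed
  finally show ?thesis .
qed

lemma invertible_mat_of_iff_left_kernel:
  fixes B :: "'s::finite \<Rightarrow> 's \<Rightarrow> real"
  shows "invertible (mat_of B) \<longleftrightarrow> (\<forall>y. (\<forall>j. (\<Sum>i\<in>UNIV. y i * B i j) = 0) \<longrightarrow> (\<forall>i. y i = 0))"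
proof -
  have "transpose (mat_of B) = mat_of (\<lambda>i j. B j i)"
    by (simp add: transpose_def mat_of_def)
  then have "invertible (mat_of B) \<longleftrightarrow> invertible (mat_of (\<lambda>i j. B j i))"
    by (metis transpose_invertible transpose_transpose)
  then show ?thesis
    unfolding invertible_mat_of_iff_right_kernel by (simp add: mult.commute)
qed

lemma mat_of_matrix_inv:
  fixes B :: "'s::finite \<Rightarrow> 's \<Rightarrow> real"
  assumes "invertible (mat_of B)"
  shows "(\<Sum>k\<in>UNIV. B i k * matrix_inv (mat_of B) $ k $ j) = (if i = j then 1 else 0)"
    and "(\<Sum>k\<in>UNIV. matrix_inv (mat_of B) $ i $ k * B k j) = (if i = j then 1 else 0)"
proof -
  have "mat_of B ** matrix_inv (mat_of B) = mat 1 \<and> matrix_inv (mat_of B) ** mat_of B = mat 1"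
    using assms unfolding invertible_def matrix_inv_def by (rule someI_ex)
  then have "(mat_of B ** matrix_inv (mat_of B)) $ i $ j = mat 1 $ i $ j"
    and "(matrix_inv (mat_of B) ** mat_of B) $ i $ j = mat 1 $ i $ j" by simp_all
  then show "(\<Sum>k\<in>UNIV. B i k * matrix_inv (mat_of B) $ k $ j) = (if i = j then 1 else 0)"
    and "(\<Sum>k\<in>UNIV. matrix_inv (mat_of B) $ i $ k * B k j) = (if i = j then 1 else 0)"
    by (simp_all add: matrix_matrix_mult_def mat_def mat_of_def)
qed

lemma sum_delta_left:
  fixes x :: "'s::finite \<Rightarrow> real"
  shows "(\<Sum>j\<in>UNIV. (if i = j then 1 else 0) * x j) = x i"
proof -
  have "(\<Sum>j\<in>UNIV. (if i = j then 1 else 0) * x j) = (\<Sum>j\<in>UNIV. if i = j then x j else 0)"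
    by (rule sum.cong) auto
  then show ?thesis by simp
qed

lemma sum_delta_right:
  fixes y :: "'s::finite \<Rightarrow> real"
  shows "(\<Sum>i\<in>UNIV. y i * (if i = j then 1 else 0)) = y j"
  using sum_delta_left[of j y] by (simp add: mult.commute eq_commute)

text \<open>\<open>I - M + e p\<close>; for \<open>p = \<pi>\<close> its inverse is the fundamental matrix \<open>Z\<close> of Kemeny and Snell.\<close>
definition fundamental_base :: "('s \<Rightarrow> 's \<Rightarrow> real) \<Rightarrow> ('s \<Rightarrow> real) \<Rightarrow> 's \<Rightarrow> 's \<Rightarrow> real" where
  "fundamental_base M p i j = (if i = j then 1 else 0) - M i j + p j"

lemma sum_fundamental_base_right:
  fixes M :: "'s::finite \<Rightarrow> 's \<Rightarrow> real"
  shows "(\<Sum>j\<in>UNIV. fundamental_base M p i j * x j)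
    = x i - (\<Sum>j\<in>UNIV. M i j * x j) + (\<Sum>j\<in>UNIV. p j * x j)"
  using sum_delta_left[of i x]
  by (simp only: fundamental_base_def distrib_right left_diff_distrib sum.distrib sum_subtractf)

lemma sum_fundamental_base_left:
  fixes M :: "'s::finite \<Rightarrow> 's \<Rightarrow> real"
  shows "(\<Sum>i\<in>UNIV. y i * fundamental_base M p i j)
    = y j - (\<Sum>i\<in>UNIV. y i * M i j) + (\<Sum>i\<in>UNIV. y i) * p j"
  using sum_delta_right[of y j]
  by (simp only: fundamental_base_def distrib_left right_diff_distrib sum.distrib sum_subtractf
      sum_distrib_right)

lemma is_stationary_average:
  assumes "is_stationary M p"
  shows "(\<Sum>i\<in>UNIV. p i * (\<Sum>j\<in>UNIV. M i j * x j)) = (\<Sum>j\<in>UNIV. p j * x j)"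
proof -
  have "(\<Sum>i\<in>UNIV. p i * (\<Sum>j\<in>UNIV. M i j * x j)) = (\<Sum>j\<in>UNIV. (\<Sum>i\<in>UNIV. p i * M i j) * x j)"
    by (rule sum_mult_sum_swap)
  also have "\<dots> = (\<Sum>j\<in>UNIV. p j * x j)" using assms by (simp add: is_stationary_def)
  finally show ?thesis .
qed

text \<open>A nonzero left null vector \<open>y\<close> of \<open>I - M\<close> gives, via \<open>|y|\<close>, a
  nonnegative superinvariant vector, which summing over all states shows to be invariant.\<close>
lemma stochastic_ex_stationary:
  fixes M :: "'s::finite \<Rightarrow> 's \<Rightarrow> real"
  assumes M: "stochastic M"
  obtains p where "is_stationary M p"
proof -
  let ?B = "fundamental_base M (\<lambda>_. 0)"
  have null: "\<And>i. (\<Sum>j\<in>UNIV. ?B i j * 1) = 0"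
    using sum_fundamental_base_right[of M "\<lambda>_. 0" _ "\<lambda>_. 1"] stochastic_row_sum[OF M] by simp
  have "\<not> invertible (mat_of ?B)"
  proof
    assume "invertible (mat_of ?B)"
    from invertible_mat_of_iff_right_kernel[THEN iffD1, OF this, rule_format, of "\<lambda>_. 1"] null
    show False by simp
  qed
  then obtain y i0 where "y i0 \<noteq> 0" and yB: "\<And>j. (\<Sum>i\<in>UNIV. y i * ?B i j) = 0"
    unfolding invertible_mat_of_iff_left_kernel by blast
  define a where "a i = \<bar>y i\<bar>" for i
  have super: "a j \<le> (\<Sum>i\<in>UNIV. a i * M i j)" for j
  proof -
    have "a j = \<bar>\<Sum>i\<in>UNIV. y i * M i j\<bar>"
      using yB[of j] sum_fundamental_base_left[of y M "\<lambda>_. 0" j] by (simp add: a_def)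
    also have "\<dots> \<le> (\<Sum>i\<in>UNIV. a i * M i j)"
      using sum_abs[of "\<lambda>i. y i * M i j" UNIV] stochastic_nonneg[OF M]
      by (simp add: a_def abs_mult)
    finally show ?thesis .
  qed
  have "(\<Sum>j\<in>UNIV. \<Sum>i\<in>UNIV. a i * M i j) = (\<Sum>i\<in>UNIV. \<Sum>j\<in>UNIV. a i * M i j)"
    by (rule sum.swap)
  also have "\<dots> = (\<Sum>i\<in>UNIV. a i)"
    by (simp add: sum_distrib_left[symmetric] stochastic_row_sum[OF M])
  finally have "(\<Sum>j\<in>UNIV. (\<Sum>i\<in>UNIV. a i * M i j) - a j) = 0"
    by (simp add: sum_subtractf)
  then have inv: "(\<Sum>i\<in>UNIV. a i * M i j) = a j" for j
    using sum_nonneg_eq_0_iff[of UNIV "\<lambda>j. (\<Sum>i\<in>UNIV. a i * M i j) - a j"] super by auto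
  define S where "S = (\<Sum>i\<in>UNIV. a i)"
  have "0 < a i0" using \<open>y i0 \<noteq> 0\<close> by (simp add: a_def)
  also have "a i0 \<le> S" unfolding S_def by (rule member_le_sum) (simp_all add: a_def)
  finally have "0 < S" .
  have "is_stationary M (\<lambda>i. a i / S)"
    unfolding is_stationary_def
    using \<open>0 < S\<close> inv by (simp add: S_def sum_divide_distrib[symmetric] a_def)
  then show thesis by (rule that)
qed

text \<open>The kernel of \<open>I - M + e p\<close> consists of harmonic, hence constant, vectors,
  and a constant \<open>c\<close> is mapped to \<open>c e\<close>.\<close>
lemma invertible_fundamental_base:
  fixes M :: "'s::finite \<Rightarrow> 's \<Rightarrow> real"
  assumes M: "stochastic M" "ergodic M" and p: "is_stationary M p"
  shows "invertible (mat_of (fundamental_base M p))"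
  unfolding invertible_mat_of_iff_right_kernel
proof (intro allI impI)
  fix x j assume ker: "\<forall>i. (\<Sum>j\<in>UNIV. fundamental_base M p i j * x j) = 0"
  define c where "c = (\<Sum>j\<in>UNIV. p j * x j)"
  have row: "x i = (\<Sum>j\<in>UNIV. M i j * x j) - c" for i
    using ker sum_fundamental_base_right[of M p i x] by (simp add: c_def)
  have psum: "(\<Sum>i\<in>UNIV. p i) = 1" using p by (simp add: is_stationary_def)
  have "c = (\<Sum>i\<in>UNIV. p i * ((\<Sum>j\<in>UNIV. M i j * x j) - c))"
    by (simp add: c_def[symmetric] row[symmetric])
  also have "\<dots> = c - c"
    using is_stationary_average[OF p, of x] psum
    by (simp add: right_diff_distrib sum_subtractf sum_distrib_right[symmetric] c_def)
  finally have "c = 0" by simp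
  then have "x i = (\<Sum>j\<in>UNIV. M i j * x j)" for i using row[of i] by simp
  then have const: "x i = x j" for i by (rule ergodic_harmonic_const[OF M])
  have "c = (\<Sum>i\<in>UNIV. p i * x j)" unfolding c_def using const by (intro sum.cong) auto
  also have "\<dots> = x j" using psum by (simp add: sum_distrib_right[symmetric])
  finally show "x j = 0" using \<open>c = 0\<close> by simp
qed

lemma stationary_unique:
  fixes M :: "'s::finite \<Rightarrow> 's \<Rightarrow> real"
  assumes M: "stochastic M" "ergodic M" and p: "is_stationary M p" and q: "is_stationary M q"
  shows "q = p"
proof -
  have "\<forall>j. (\<Sum>i\<in>UNIV. (q i - p i) * fundamental_base M p i j) = 0"
    using p q sum_fundamental_base_left[of "\<lambda>i. q i - p i" M p]
    by (simp add: is_stationary_def left_diff_distrib sum_subtractf)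
  then show ?thesis
    using invertible_fundamental_base[OF M p, unfolded invertible_mat_of_iff_left_kernel,
        rule_format, of "\<lambda>i. q i - p i"]
    by (simp add: fun_eq_iff)
qed

lemma is_stationary_stat_dist:
  fixes M :: "'s::finite \<Rightarrow> 's \<Rightarrow> real"
  assumes M: "stochastic M" "ergodic M"
  shows "is_stationary M (stat_dist M)"
proof -
  obtain p where p: "is_stationary M p" using stochastic_ex_stationary[OF M(1)] .
  have "stat_dist M = p"
    unfolding stat_dist_def using p stationary_unique[OF M p] by (rule the_equality)
  with p show ?thesis by simp
qed

section \<open>Fundamental matrix and Kemeny's constant\<close>

definition fundamental :: "('s::finite \<Rightarrow> 's \<Rightarrow> real) \<Rightarrow> 's \<Rightarrow> 's \<Rightarrow> real" where
  "fundamental M i j = matrix_inv (mat_of (fundamental_base M (stat_dist M))) $ i $ j"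

lemma kemeny_chain_eq_sum_fundamental: "kemeny_chain M = (\<Sum>k\<in>UNIV. fundamental M k k)"
  by (simp add: kemeny_chain_def trace_def fundamental_def fundamental_base_def mat_of_def)

lemma funpow_affine_zero_mono:
  fixes \<delta> :: real
  assumes "0 < \<delta>" "\<delta> \<le> 1"
  shows "((\<lambda>x. (1 + x) / \<delta>) ^^ m) 0 \<le> ((\<lambda>x. (1 + x) / \<delta>) ^^ Suc m) 0"
proof -
  have "0 \<le> ((\<lambda>x. (1 + x) / \<delta>) ^^ m) 0"
    by (induction m) (use assms in auto)
  then show ?thesis
    using assms by (simp add: le_divide_eq mult_left_le add_increasing)
qed

locale ergodic_chain =
  fixes M :: "'s::finite \<Rightarrow> 's \<Rightarrow> real"
  assumes stochastic: "stochastic M" and ergodic: "ergodic M"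
begin

lemma stationary: "is_stationary M (stat_dist M)"
  using is_stationary_stat_dist stochastic ergodic .

lemma stat_dist_nonneg: "0 \<le> stat_dist M s"
  using stationary by (simp add: is_stationary_def)

lemma sum_stat_dist: "(\<Sum>s\<in>UNIV. stat_dist M s) = 1"
  using stationary by (simp add: is_stationary_def)

lemma stat_dist_le_1: "stat_dist M s \<le> 1"
  using member_le_sum[of s UNIV "stat_dist M"] stat_dist_nonneg sum_stat_dist by simp

lemma fundamental_right_inverse:
  "(\<Sum>k\<in>UNIV. fundamental_base M (stat_dist M) i k * fundamental M k j) = (if i = j then 1 else 0)"
  unfolding fundamental_def
  by (rule mat_of_matrix_inv(1)[OF invertible_fundamental_base[OF stochastic ergodic stationary]])

lemma fundamental_left_inverse:
  "(\<Sum>k\<in>UNIV. fundamental M i k * fundamental_base M (stat_dist M) k j) = (if i = j then 1 else 0)"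
  unfolding fundamental_def
  by (rule mat_of_matrix_inv(2)[OF invertible_fundamental_base[OF stochastic ergodic stationary]])

lemma sum_fundamental_row: "(\<Sum>j\<in>UNIV. fundamental M i j) = 1"
proof -
  let ?B = "fundamental_base M (stat_dist M)"
  have row: "(\<Sum>j\<in>UNIV. ?B k j) = 1" for k
    using sum_fundamental_base_right[of M "stat_dist M" k "\<lambda>_. 1"]
    by (simp add: stochastic_row_sum[OF stochastic] sum_stat_dist)
  have "1 = (\<Sum>j\<in>UNIV. \<Sum>k\<in>UNIV. fundamental M i k * ?B k j)"
    by (simp add: fundamental_left_inverse)
  also have "\<dots> = (\<Sum>k\<in>UNIV. fundamental M i k * (\<Sum>j\<in>UNIV. ?B k j))"
    by (subst sum.swap) (simp add: sum_distrib_left)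
  finally show ?thesis by (simp add: row)
qed

lemma stat_dist_fundamental: "(\<Sum>i\<in>UNIV. stat_dist M i * fundamental M i j) = stat_dist M j"
proof -
  let ?p = "stat_dist M" and ?B = "fundamental_base M (stat_dist M)"
  have pB: "(\<Sum>i\<in>UNIV. ?p i * ?B i k) = ?p k" for k
    using sum_fundamental_base_left[of ?p M ?p k] stationary sum_stat_dist
    by (simp add: is_stationary_def)
  have "?p j = (\<Sum>i\<in>UNIV. ?p i * (\<Sum>k\<in>UNIV. ?B i k * fundamental M k j))"
    by (simp add: fundamental_right_inverse sum_delta_right)
  also have "\<dots> = (\<Sum>k\<in>UNIV. (\<Sum>i\<in>UNIV. ?p i * ?B i k) * fundamental M k j)"
    by (rule sum_mult_sum_swap)
  finally show ?thesis by (simp add: pB)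
qed

text \<open>\<open>Z = I - e \<pi> + M Z\<close>, read off from \<open>(I - M + e \<pi>) Z = I\<close> and \<open>\<pi> Z = \<pi>\<close>.\<close>
lemma fundamental_eq:
  "fundamental M i k = (if i = k then 1 else 0) - stat_dist M k + (\<Sum>j\<in>UNIV. M i j * fundamental M j k)"
  using fundamental_right_inverse[of i k] stat_dist_fundamental[of k]
    sum_fundamental_base_right[of M "stat_dist M" i "\<lambda>j. fundamental M j k"]
  by simp

lemma fundamental_gap_eq:
  assumes "i \<noteq> k"
  shows "fundamental M k k - fundamental M i k
    = stat_dist M k + (\<Sum>j\<in>UNIV. M i j * (fundamental M k k - fundamental M j k))"
  using fundamental_eq[of i k] assms stochastic_average_const[OF stochastic, of i]
  by (simp add: right_diff_distrib sum_subtractf)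

lemma fundamental_le_diag: "fundamental M i k \<le> fundamental M k k"
  using ergodic_min_principle[OF stochastic ergodic, of "\<lambda>i. fundamental M k k - fundamental M i k" k
      "stat_dist M k"] fundamental_gap_eq stat_dist_nonneg
  by simp

lemma kemeny_chain_minus_one:
  "kemeny_chain M - 1 = (\<Sum>k\<in>UNIV. fundamental M k k - fundamental M i k)"
  using sum_fundamental_row[of i] by (simp add: kemeny_chain_eq_sum_fundamental sum_subtractf)

lemma kemeny_chain_ge_1: "1 \<le> kemeny_chain M"
proof -
  have "0 \<le> (\<Sum>k\<in>UNIV. fundamental M k k - fundamental M undefined k)"
    by (rule sum_nonneg) (simp add: fundamental_le_diag)
  then show ?thesis using kemeny_chain_minus_one[of undefined] by simp
qed

lemma fundamental_gap_weighted_bound: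
  assumes "\<And>k. \<bar>G k\<bar> \<le> eps"
  shows "\<bar>\<Sum>k\<in>UNIV. (fundamental M j k - fundamental M k k) * G k\<bar> \<le> (kemeny_chain M - 1) * eps"
proof -
  have "\<bar>\<Sum>k\<in>UNIV. (fundamental M j k - fundamental M k k) * G k\<bar>
      \<le> (\<Sum>k\<in>UNIV. (fundamental M k k - fundamental M j k) * eps)"
  proof (rule order_trans[OF sum_abs sum_mono])
    fix k
    show "\<bar>(fundamental M j k - fundamental M k k) * G k\<bar> \<le> (fundamental M k k - fundamental M j k) * eps"
      using fundamental_le_diag[of j k] assms[of k]
      by (simp add: abs_mult abs_minus_commute mult_left_mono)
  qed
  also have "\<dots> = (kemeny_chain M - 1) * eps"
    by (simp add: kemeny_chain_minus_one[of j] sum_distrib_right)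
  finally show ?thesis .
qed

lemma stat_dist_diff_eq:
  assumes p: "is_stationary M0 p"
  shows "(\<Sum>j\<in>UNIV. (\<Sum>i\<in>UNIV. p i * (M i j - M0 i j)) * fundamental M j k) = stat_dist M k - p k"
proof -
  let ?Z = "fundamental M" and ?q = "stat_dist M" and ?B = "fundamental_base M (stat_dist M)"
  have x_eq: "(\<Sum>i\<in>UNIV. p i * (M i j - M0 i j)) = ?q j - (\<Sum>i\<in>UNIV. p i * ?B i j)" for j
    using sum_fundamental_base_left[of p M ?q j] p
    by (simp add: is_stationary_def right_diff_distrib sum_subtractf)
  have "(\<Sum>j\<in>UNIV. (\<Sum>i\<in>UNIV. p i * (M i j - M0 i j)) * ?Z j k)
      = (\<Sum>j\<in>UNIV. ?q j * ?Z j k) - (\<Sum>j\<in>UNIV. (\<Sum>i\<in>UNIV. p i * ?B i j) * ?Z j k)"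
    by (simp add: x_eq left_diff_distrib sum_subtractf)
  also have "(\<Sum>j\<in>UNIV. (\<Sum>i\<in>UNIV. p i * ?B i j) * ?Z j k) = (\<Sum>i\<in>UNIV. p i * (\<Sum>j\<in>UNIV. ?B i j * ?Z j k))"
    by (rule sum_mult_sum_swap[symmetric])
  finally show ?thesis by (simp add: stat_dist_fundamental fundamental_right_inverse sum_delta_right)
qed

text \<open>Perturbation bound: if \<open>p\<close> is stationary for another chain \<open>M0\<close>, then
  \<open>\<pi> - p = x Z\<close> with \<open>x = p (M - M0)\<close>, and since \<open>x\<close> sums to zero, \<open>Z\<close> may be replaced by
  \<open>Z - e diag(Z)\<close>, whose rows are bounded by the Kemeny constant minus one.\<close>
lemma stat_dist_perturbation:
  assumes M0: "stochastic M0" and p: "is_stationary M0 p" and G: "\<And>s. \<bar>G s\<bar> \<le> eps"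
  shows "\<bar>(\<Sum>s\<in>UNIV. stat_dist M s * G s) - (\<Sum>s\<in>UNIV. p s * G s)\<bar>
    \<le> (\<Sum>j\<in>UNIV. \<bar>\<Sum>i\<in>UNIV. p i * (M i j - M0 i j)\<bar>) * ((kemeny_chain M - 1) * eps)"
proof -
  let ?Z = "fundamental M"
  define x where "x j = (\<Sum>i\<in>UNIV. p i * (M i j - M0 i j))" for j
  have "(\<Sum>j\<in>UNIV. x j) = (\<Sum>i\<in>UNIV. p i * (\<Sum>j\<in>UNIV. M i j * 1)) - (\<Sum>i\<in>UNIV. p i * (\<Sum>j\<in>UNIV. M0 i j * 1))"
    using sum_mult_sum_swap[where a=p and b=M and c="\<lambda>_. 1" and I=UNIV and J=UNIV]
      sum_mult_sum_swap[where a=p and b=M0 and c="\<lambda>_. 1" and I=UNIV and J=UNIV]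
    by (simp add: x_def right_diff_distrib sum_subtractf)
  then have x_sum: "(\<Sum>j\<in>UNIV. x j) = 0"
    by (simp add: stochastic_row_sum[OF stochastic] stochastic_row_sum[OF M0])
  have "(\<Sum>s\<in>UNIV. stat_dist M s * G s) - (\<Sum>s\<in>UNIV. p s * G s)
      = (\<Sum>k\<in>UNIV. (\<Sum>j\<in>UNIV. x j * ?Z j k) * G k)"
    by (simp add: x_def stat_dist_diff_eq[OF p] left_diff_distrib sum_subtractf)
  also have "\<dots> = (\<Sum>j\<in>UNIV. x j * (\<Sum>k\<in>UNIV. ?Z j k * G k))"
    by (rule sum_mult_sum_swap[symmetric])
  also have "\<dots> = (\<Sum>j\<in>UNIV. x j * (\<Sum>k\<in>UNIV. (?Z j k - ?Z k k) * G k))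
      + (\<Sum>j\<in>UNIV. x j) * (\<Sum>k\<in>UNIV. ?Z k k * G k)"
    by (simp add: left_diff_distrib right_diff_distrib sum_subtractf sum_distrib_right)
  finally have diff: "(\<Sum>s\<in>UNIV. stat_dist M s * G s) - (\<Sum>s\<in>UNIV. p s * G s)
      = (\<Sum>j\<in>UNIV. x j * (\<Sum>k\<in>UNIV. (?Z j k - ?Z k k) * G k))"
    using x_sum by simp
  have "\<bar>\<Sum>j\<in>UNIV. x j * (\<Sum>k\<in>UNIV. (?Z j k - ?Z k k) * G k)\<bar>
      \<le> (\<Sum>j\<in>UNIV. \<bar>x j\<bar> * ((kemeny_chain M - 1) * eps))"
    using fundamental_gap_weighted_bound[OF G]
    by (intro order_trans[OF sum_abs sum_mono]) (simp add: abs_mult mult_left_mono)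
  then show ?thesis by (simp add: diff x_def sum_distrib_right)
qed

text \<open>The uniform bound on Kemeny's constant. Let \<open>w j = Z k k - Z j k\<close> (which is \<open>\<pi> k\<close> times
  the mean passage time from \<open>j\<close> to \<open>k\<close>) and \<open>W = w i0\<close> its maximum. Then \<open>W - w\<close> vanishes at \<open>i0\<close>,
  equals \<open>W\<close> at \<open>k\<close>, and along a transition \<open>t \<rightarrow> t'\<close> with \<open>M t t' \<ge> \<delta>\<close> it grows at most
  by \<open>x \<mapsto> (1 + x) / \<delta>\<close>.\<close>
lemma fundamental_gap_step:
  assumes max: "\<And>j. fundamental M k k - fundamental M j k \<le> W" and "t \<noteq> k"
  shows "M t t' * (W - (fundamental M k k - fundamental M t' k))
    \<le> 1 + (W - (fundamental M k k - fundamental M t k))"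
proof -
  let ?w = "\<lambda>j. fundamental M k k - fundamental M j k"
  have "M t t' * (W - ?w t') \<le> (\<Sum>j\<in>UNIV. M t j * (W - ?w j))"
    using max stochastic_nonneg[OF stochastic]
    by (intro member_le_sum[of t' UNIV "\<lambda>j. M t j * (W - ?w j)"]) auto
  also have "\<dots> = W - (\<Sum>j\<in>UNIV. M t j * ?w j)"
    by (simp add: right_diff_distrib sum_subtractf stochastic_average_const[OF stochastic])
  also have "\<dots> = W - ?w t + stat_dist M k"
    using fundamental_gap_eq[OF \<open>t \<noteq> k\<close>] by simp
  finally show ?thesis using stat_dist_le_1[of k] by linarith
qed

lemma fundamental_gap_le_iterate:
  assumes Md: "\<And>i j. 0 \<le> Md i j" and "0 < \<delta>" "\<delta> \<le> 1"
    and low: "\<And>t t'. 0 < Md t t' \<Longrightarrow> \<delta> \<le> M t t'"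
    and reach: "0 < mpow Md n i0 k"
    and max: "\<And>j. fundamental M k k - fundamental M j k \<le> fundamental M k k - fundamental M i0 k"
  shows "fundamental M k k - fundamental M i0 k \<le> ((\<lambda>x. (1 + x) / \<delta>) ^^ n) 0"
proof -
  let ?w = "\<lambda>j. fundamental M k k - fundamental M j k"
  define W where "W = ?w i0"
  define g where "g = (\<lambda>x::real. (1 + x) / \<delta>)"
  have g_mono: "(g ^^ m) 0 \<le> (g ^^ Suc m) 0" for m
    unfolding g_def using \<open>0 < \<delta>\<close> \<open>\<delta> \<le> 1\<close> by (rule funpow_affine_zero_mono)
  have "W - ?w s \<le> (g ^^ m) 0" if "0 < mpow Md m i0 s" for m s
    using that
  proof (induction m arbitrary: s)
    case 0
    then show ?case by (simp add: W_def split: if_splits)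
  next
    case (Suc m)
    then obtain t where "0 < mpow Md m i0 t" and "0 < Md t s"
      using mpow_Suc_pos_obtain[of Md, OF Md] by blast
    with Suc.IH have IH: "W - ?w t \<le> (g ^^ m) 0" by blast
    show ?case
    proof (cases "t = k")
      case True
      then show ?thesis
        using IH g_mono[of m] fundamental_le_diag[of s k] by simp
    next
      case False
      have "\<delta> * (W - ?w s) \<le> M t s * (W - ?w s)"
        using low[OF \<open>0 < Md t s\<close>] max by (intro mult_right_mono) (auto simp: W_def)
      also have "\<dots> \<le> 1 + (g ^^ m) 0"
        using fundamental_gap_step[of k W t s] False IH max by (force simp: W_def)
      finally show ?thesis using \<open>0 < \<delta>\<close> by (simp add: g_def le_divide_eq mult.commute)
    qed
  qed
  from this[OF reach] show ?thesis by (simp add: W_def g_def)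
qed

end

section \<open>Policies\<close>

lemma policy_nonneg: "mu \<in> policies A \<Longrightarrow> 0 \<le> mu i s x"
  by (simp add: policies_def)

lemma jpol_nonneg: "mu \<in> policies A \<Longrightarrow> 0 \<le> jpol mu s a"
  unfolding jpol_def by (rule prod_nonneg) (simp add: policy_nonneg)

lemma jpol_eq_0:
  assumes "mu \<in> policies A" "a \<notin> joint_actions A"
  shows "jpol mu s a = 0"
proof -
  obtain i where "a i \<notin> A i" using assms(2) by (auto simp: joint_actions_def)
  then have "mu i s (a i) = 0" using assms(1) by (simp add: policies_def)
  then show ?thesis unfolding jpol_def by (intro prod_zero) auto
qed

lemma sum_policy:
  fixes mu :: "'i::finite \<Rightarrow> 's::finite \<Rightarrow> 'act::finite \<Rightarrow> real"
  assumes "mu \<in> policies A"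
  shows "(\<Sum>x\<in>UNIV. mu i s x) = 1"
proof -
  have "(\<Sum>x\<in>UNIV. mu i s x) = (\<Sum>x\<in>A i. mu i s x)"
    using assms by (intro sum.mono_neutral_right) (auto simp: policies_def)
  also have "\<dots> = 1" using assms by (simp add: policies_def)
  finally show ?thesis .
qed

lemma sum_jpol:
  fixes mu :: "'i::finite \<Rightarrow> 's::finite \<Rightarrow> 'act::finite \<Rightarrow> real"
  assumes "mu \<in> policies A"
  shows "(\<Sum>a\<in>UNIV. jpol mu s a) = 1"
proof -
  have "(\<Sum>a\<in>UNIV. jpol mu s a) = (\<Prod>i\<in>UNIV. \<Sum>x\<in>UNIV. mu i s x)"
    by (simp add: jpol_def prod_sum_PiE)
  also have "\<dots> = 1" by (simp add: sum_policy[OF assms])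
  finally show ?thesis .
qed

lemma jpol_mult_P_nonneg:
  assumes "valid_game A P" "mu \<in> policies A"
  shows "0 \<le> jpol mu s a * P s a s'"
  using assms jpol_nonneg[OF assms(2)] jpol_eq_0[OF assms(2)]
  by (cases "a \<in> joint_actions A") (auto simp: valid_game_def)

lemma jpol_mult_sum_P:
  assumes "valid_game A P" "mu \<in> policies A"
  shows "jpol mu s a * (\<Sum>s'\<in>UNIV. P s a s') = jpol mu s a"
  using assms jpol_eq_0[OF assms(2)]
  by (cases "a \<in> joint_actions A") (auto simp: valid_game_def)

lemma stochastic_Pmu:
  assumes game: "valid_game A P" and mu: "mu \<in> policies A"
  shows "stochastic (Pmu P mu)"
  unfolding stochastic_def
proof (intro conjI allI)
  show "0 \<le> Pmu P mu s s'" for s s'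
    unfolding Pmu_def by (rule sum_nonneg) (rule jpol_mult_P_nonneg[OF game mu])
  show "(\<Sum>s'\<in>UNIV. Pmu P mu s s') = 1" for s
  proof -
    have "(\<Sum>s'\<in>UNIV. Pmu P mu s s') = (\<Sum>a\<in>UNIV. jpol mu s a * (\<Sum>s'\<in>UNIV. P s a s'))"
      unfolding Pmu_def by (subst sum.swap) (simp add: sum_distrib_left)
    then show ?thesis by (simp add: jpol_mult_sum_P[OF game mu] sum_jpol[OF mu])
  qed
qed

lemma jpol_mult_P_le_Pmu:
  assumes "valid_game A P" "mu \<in> policies A"
  shows "jpol mu s a * P s a s' \<le> Pmu P mu s s'"
  unfolding Pmu_def
  by (rule member_le_sum[of a UNIV "\<lambda>a. jpol mu s a * P s a s'"])
    (simp_all add: jpol_mult_P_nonneg[OF assms])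

lemma jpol_argmax_ge:
  fixes mu :: "'i::finite \<Rightarrow> 's::finite \<Rightarrow> 'act::finite \<Rightarrow> real"
  assumes mu: "mu \<in> policies A" and max: "\<And>b. jpol mu s b \<le> jpol mu s a"
  shows "1 / real (card (UNIV :: ('i \<Rightarrow> 'act) set)) \<le> jpol mu s a"
proof -
  have "1 = (\<Sum>b\<in>UNIV. jpol mu s b)" using sum_jpol[OF mu] by simp
  also have "\<dots> \<le> real (card (UNIV :: ('i \<Rightarrow> 'act) set)) * jpol mu s a"
    using sum_mono[of UNIV "jpol mu s" "\<lambda>_. jpol mu s a", OF max] by simp
  finally show ?thesis by (simp add: divide_le_eq mult.commute card_gt_0_iff)
qed

lemma jpol_diff_imp_stochastic_row:
  assumes "valid_game A P" "mu \<in> policies A" "mu' \<in> policies A" "jpol mu' s a \<noteq> jpol mu s a"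
  shows "0 \<le> P s a s'" and "(\<Sum>s'\<in>UNIV. P s a s') = 1"
proof -
  have "a \<in> joint_actions A"
    using assms(4) jpol_eq_0[OF assms(2), of a s] jpol_eq_0[OF assms(3), of a s]
    by (cases "a \<in> joint_actions A") auto
  then show "0 \<le> P s a s'" and "(\<Sum>s'\<in>UNIV. P s a s') = 1"
    using assms(1) by (auto simp: valid_game_def)
qed

lemma abs_Pmu_diff_le:
  assumes "valid_game A P" "mu \<in> policies A" "mu' \<in> policies A"
  shows "\<bar>Pmu P mu' s s' - Pmu P mu s s'\<bar> \<le> (\<Sum>a\<in>UNIV. \<bar>jpol mu' s a - jpol mu s a\<bar> * P s a s')"
proof -
  have "\<bar>Pmu P mu' s s' - Pmu P mu s s'\<bar> = \<bar>\<Sum>a\<in>UNIV. (jpol mu' s a - jpol mu s a) * P s a s'\<bar>"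
    unfolding Pmu_def by (simp add: left_diff_distrib sum_subtractf)
  also have "\<dots> \<le> (\<Sum>a\<in>UNIV. \<bar>(jpol mu' s a - jpol mu s a) * P s a s'\<bar>)" by (rule sum_abs)
  also have "\<dots> = (\<Sum>a\<in>UNIV. \<bar>jpol mu' s a - jpol mu s a\<bar> * P s a s')"
  proof (rule sum.cong)
    show "\<bar>(jpol mu' s a - jpol mu s a) * P s a s'\<bar> = \<bar>jpol mu' s a - jpol mu s a\<bar> * P s a s'" for a
      using jpol_diff_imp_stochastic_row(1)[OF assms, of s a s']
      by (cases "jpol mu' s a = jpol mu s a") (simp_all add: abs_mult)
  qed simp
  finally show ?thesis .
qed

lemma sum_abs_jpol_diff_mult_P:
  assumes "valid_game A P" "mu \<in> policies A" "mu' \<in> policies A"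
  shows "(\<Sum>s'\<in>UNIV. \<Sum>a\<in>UNIV. \<bar>jpol mu' s a - jpol mu s a\<bar> * P s a s')
    = (\<Sum>a\<in>UNIV. \<bar>jpol mu' s a - jpol mu s a\<bar>)"
proof -
  have "(\<Sum>s'\<in>UNIV. \<Sum>a\<in>UNIV. \<bar>jpol mu' s a - jpol mu s a\<bar> * P s a s')
      = (\<Sum>a\<in>UNIV. \<bar>jpol mu' s a - jpol mu s a\<bar> * (\<Sum>s'\<in>UNIV. P s a s'))"
    by (subst sum.swap) (simp add: sum_distrib_left)
  also have "\<dots> = (\<Sum>a\<in>UNIV. \<bar>jpol mu' s a - jpol mu s a\<bar>)"
  proof (rule sum.cong)
    show "\<bar>jpol mu' s a - jpol mu s a\<bar> * (\<Sum>s'\<in>UNIV. P s a s') = \<bar>jpol mu' s a - jpol mu s a\<bar>" for a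
      using jpol_diff_imp_stochastic_row(2)[OF assms, of s a]
      by (cases "jpol mu' s a = jpol mu s a") simp_all
  qed simp
  finally show ?thesis .
qed

definition det_policy :: "('s \<Rightarrow> 'i \<Rightarrow> 'act) \<Rightarrow> 'i \<Rightarrow> 's \<Rightarrow> 'act \<Rightarrow> real" where
  "det_policy d i s x = (if x = d s i then 1 else 0)"

lemma det_policy_in_policies:
  assumes "\<And>s. d s \<in> joint_actions A"
  shows "det_policy d \<in> policies A"
  using assms by (auto simp: policies_def det_policy_def joint_actions_def)

lemma Pmu_det_policy:
  fixes d :: "'s::finite \<Rightarrow> 'i::finite \<Rightarrow> 'act::finite"
  shows "Pmu P (det_policy d) = (\<lambda>s s'. P s (d s) s')"
proof (intro ext)
  fix s s'
  have "jpol (det_policy d) s a = (if a = d s then 1 else 0)" for a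
  proof (cases "a = d s")
    case False
    then obtain i where "a i \<noteq> d s i" by auto
    then show ?thesis using False unfolding jpol_def by (auto simp: det_policy_def intro: prod_zero)
  qed (simp add: jpol_def det_policy_def)
  then have "Pmu P (det_policy d) s s' = (\<Sum>a\<in>UNIV. if a = d s then P s a s' else 0)"
    unfolding Pmu_def by (intro sum.cong) auto
  then show "Pmu P (det_policy d) s s' = P s (d s) s'" by simp
qed

section \<open>The team game\<close>

lemma sum_jpol_advantage:
  assumes mu': "mu' \<in> policies A"
  shows "(\<Sum>a\<in>UNIV. jpol mu' s a * advantage P mu g gbar s a)
    = (\<Sum>a\<in>UNIV. jpol mu' s a * g s a) - gbar
      + (\<Sum>s'\<in>UNIV. Pmu P mu' s s' * Vfun P mu g gbar s') - Vfun P mu g gbar s"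
proof -
  let ?V = "Vfun P mu g gbar"
  have "(\<Sum>a\<in>UNIV. jpol mu' s a * (\<Sum>s'\<in>UNIV. P s a s' * ?V s')) = (\<Sum>s'\<in>UNIV. Pmu P mu' s s' * ?V s')"
    unfolding Pmu_def by (rule sum_mult_sum_swap)
  then show ?thesis
    using sum_jpol[OF mu', of s]
    by (simp add: advantage_def Qfun_def algebra_simps sum.distrib sum_subtractf
        sum_distrib_left[symmetric] sum_distrib_right[symmetric])
qed

locale ergodic_team_game =
  fixes A :: "'i::finite \<Rightarrow> 'act::finite set" and P :: "'s::finite \<Rightarrow> ('i \<Rightarrow> 'act) \<Rightarrow> 's \<Rightarrow> real"
  assumes valid: "valid_game A P" and ergodic_Pmu: "\<And>nu. nu \<in> policies A \<Longrightarrow> ergodic (Pmu P nu)"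
begin

lemma ergodic_chain_Pmu: "mu \<in> policies A \<Longrightarrow> ergodic_chain (Pmu P mu)"
  by (simp add: ergodic_chain_def stochastic_Pmu[OF valid] ergodic_Pmu)

lemma is_stationary_pi_mu: "mu \<in> policies A \<Longrightarrow> is_stationary (Pmu P mu) (pi_mu P mu)"
  unfolding pi_mu_def by (rule ergodic_chain.stationary[OF ergodic_chain_Pmu])

lemma sum_pi_mu: "mu \<in> policies A \<Longrightarrow> (\<Sum>s\<in>UNIV. pi_mu P mu s) = 1"
  using is_stationary_pi_mu by (simp add: is_stationary_def)

lemma avg_affine:
  assumes mu: "mu \<in> policies A"
  shows "avg P mu (\<lambda>s a. f s a + c * g s a + d) = avg P mu f + c * avg P mu g + d"
proof -
  have "avg P mu (\<lambda>s a. f s a + c * g s a + d)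
     = avg P mu f + c * avg P mu g + (\<Sum>s\<in>UNIV. pi_mu P mu s * ((\<Sum>a\<in>UNIV. jpol mu s a) * d))"
    unfolding avg_def
    by (simp add: distrib_left sum.distrib sum_distrib_left sum_distrib_right mult.assoc mult.left_commute)
  also have "\<dots> = avg P mu f + c * avg P mu g + d"
    using sum_pi_mu[OF mu] by (simp add: sum_jpol[OF mu] sum_distrib_right[symmetric])
  finally show ?thesis .
qed

text \<open>Expanding \<open>(r - \<eta>)\<^sup>2 = (r - \<eta>')\<^sup>2 + 2 (\<eta>' - \<eta>) r - (\<eta>' - \<eta>) (\<eta> + \<eta>')\<close>.\<close>
lemma avg_fmu:
  assumes mu': "mu' \<in> policies A"
  shows "avg P mu' (fmu beta P r mu) = Jobj beta P r mu' - beta * (eta P r mu' - eta P r mu)\<^sup>2"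
proof -
  define e where "e = eta P r mu"
  define e' where "e' = eta P r mu'"
  have "(\<lambda>s a. (r s a - e)\<^sup>2) = (\<lambda>s a. (r s a - e')\<^sup>2 + (2 * (e' - e)) * r s a + (- ((e' - e) * (e + e'))))"
    by (auto simp: fun_eq_iff algebra_simps power2_eq_square)
  then have sq: "avg P mu' (\<lambda>s a. (r s a - e)\<^sup>2) = zeta P r mu' + (e' - e)\<^sup>2"
    using avg_affine[OF mu', of "\<lambda>s a. (r s a - e')\<^sup>2" "2 * (e' - e)" r "- ((e' - e) * (e + e'))"]
    by (simp add: zeta_def e'_def eta_def[symmetric] algebra_simps power2_eq_square)
  have "fmu beta P r mu = (\<lambda>s a. r s a + (- beta) * (r s a - e)\<^sup>2 + 0)"
    by (simp add: fmu_def fun_eq_iff e_def)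
  then have "avg P mu' (fmu beta P r mu) = e' - beta * (zeta P r mu' + (e' - e)\<^sup>2)"
    using avg_affine[OF mu', of r "- beta" "\<lambda>s a. (r s a - e)\<^sup>2" 0] sq
    by (simp add: e'_def eta_def)
  then show ?thesis by (simp add: Jobj_def e_def e'_def algebra_simps)
qed

text \<open>Performance difference identity: the relative values \<open>V\<close> of \<open>\<mu>\<close> telescope under the
  stationary distribution of \<open>\<mu>'\<close>. This holds for any \<open>V\<close> whatsoever, so it does not matter
  which solution of the Poisson equation \<open>Vfun\<close> picks, or whether there is one.\<close>
lemma performance_difference:
  assumes mu: "mu \<in> policies A" and mu': "mu' \<in> policies A"
  shows "avg P mu' g - avg P mu g
    = (\<Sum>s\<in>UNIV. pi_mu P mu' s * (\<Sum>a\<in>UNIV. jpol mu' s a * advantage P mu g (avg P mu g) s a))"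
proof -
  let ?V = "Vfun P mu g (avg P mu g)"
  have "(\<Sum>s\<in>UNIV. pi_mu P mu' s * (\<Sum>a\<in>UNIV. jpol mu' s a * advantage P mu g (avg P mu g) s a))
     = avg P mu' g - (\<Sum>s\<in>UNIV. pi_mu P mu' s) * avg P mu g
       + (\<Sum>s\<in>UNIV. pi_mu P mu' s * (\<Sum>s'\<in>UNIV. Pmu P mu' s s' * ?V s'))
       - (\<Sum>s\<in>UNIV. pi_mu P mu' s * ?V s)"
    unfolding sum_jpol_advantage[OF mu'] avg_def[of P mu' g]
    by (simp add: algebra_simps sum.distrib sum_subtractf sum_distrib_right sum_distrib_left)
  also have "\<dots> = avg P mu' g - avg P mu g"
    using is_stationary_average[OF is_stationary_pi_mu[OF mu'], of ?V] sum_pi_mu[OF mu'] by simp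
  finally show ?thesis by simp
qed

lemma sum_abs_pi_mu_Pmu_diff_le_DTV:
  assumes mu: "mu \<in> policies A" and mu': "mu' \<in> policies A"
  shows "(\<Sum>j\<in>UNIV. \<bar>\<Sum>i\<in>UNIV. pi_mu P mu i * (Pmu P mu' i j - Pmu P mu i j)\<bar>) \<le> 2 * DTV P mu' mu"
proof -
  let ?D = "\<lambda>i a. \<bar>jpol mu' i a - jpol mu i a\<bar>"
  have "0 \<le> pi_mu P mu i" for i
    using is_stationary_pi_mu[OF mu] by (simp add: is_stationary_def)
  then have "(\<Sum>j\<in>UNIV. \<bar>\<Sum>i\<in>UNIV. pi_mu P mu i * (Pmu P mu' i j - Pmu P mu i j)\<bar>)
      \<le> (\<Sum>j\<in>UNIV. \<Sum>i\<in>UNIV. pi_mu P mu i * (\<Sum>a\<in>UNIV. ?D i a * P i a j))"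
    using abs_Pmu_diff_le[OF valid mu mu']
    by (intro sum_mono order_trans[OF sum_abs sum_mono]) (simp add: abs_mult mult_left_mono)
  also have "\<dots> = (\<Sum>i\<in>UNIV. pi_mu P mu i * (\<Sum>j\<in>UNIV. \<Sum>a\<in>UNIV. ?D i a * P i a j))"
    by (subst sum.swap) (simp add: sum_distrib_left)
  also have "\<dots> = (\<Sum>i\<in>UNIV. pi_mu P mu i * (\<Sum>a\<in>UNIV. ?D i a))"
    by (simp add: sum_abs_jpol_diff_mult_P[OF valid mu mu'])
  also have "\<dots> = 2 * DTV P mu' mu"
    unfolding DTV_def by (simp add: sum_distrib_left)
  finally show ?thesis .
qed

definition min_pos_prob :: real where
  "min_pos_prob = Min (insert 1 {P s a s' |s a s'. 0 < P s a s'})"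

lemma min_pos_prob_pos: "0 < min_pos_prob"
  and min_pos_prob_le: "0 < P s a s' \<Longrightarrow> min_pos_prob \<le> P s a s'"
proof -
  have "{P s a s' |s a s'. 0 < P s a s'} \<subseteq> range (\<lambda>(s, a, s'). P s a s')"
    by clarify (metis (no_types) case_prod_conv rangeI)
  then have "finite {P s a s' |s a s'. 0 < P s a s'}" by (rule finite_subset) simp
  then have fin: "finite (insert 1 {P s a s' |s a s'. 0 < P s a s'})" by simp
  show "0 < min_pos_prob"
    unfolding min_pos_prob_def using fin by (subst Min_gr_iff) auto
  show "min_pos_prob \<le> P s a s'" if "0 < P s a s'"
    unfolding min_pos_prob_def using fin that by (intro Min_le) auto
qed

text \<open>Lower bound on \<open>P\<^sup>\<mu>\<close> along transitions of a most likely joint action of \<open>\<mu>\<close>.\<close>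
definition step_lb :: real where
  "step_lb = min 1 (min_pos_prob / real (card (UNIV :: ('i \<Rightarrow> 'act) set)))"

lemma step_lb_pos: "0 < step_lb"
  using min_pos_prob_pos by (simp add: step_lb_def card_gt_0_iff)

lemma Pmu_ge_step_lb:
  assumes mu: "mu \<in> policies A" and max: "\<And>b. jpol mu s b \<le> jpol mu s a" and "0 < P s a s'"
  shows "step_lb \<le> Pmu P mu s s'"
proof -
  have "step_lb \<le> 1 / real (card (UNIV :: ('i \<Rightarrow> 'act) set)) * min_pos_prob"
    by (simp add: step_lb_def)
  also have "\<dots> \<le> jpol mu s a * P s a s'"
    using jpol_argmax_ge[OF mu max] min_pos_prob_le[OF \<open>0 < P s a s'\<close>] min_pos_prob_pos
      jpol_nonneg[OF mu]
    by (intro mult_mono) auto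
  also have "\<dots> \<le> Pmu P mu s s'" by (rule jpol_mult_P_le_Pmu[OF valid mu])
  finally show ?thesis .
qed

definition passage_steps :: "('s \<Rightarrow> 'i \<Rightarrow> 'act) \<Rightarrow> 's \<Rightarrow> 's \<Rightarrow> nat" where
  "passage_steps d i k = (LEAST n. 0 < mpow (\<lambda>s s'. P s (d s) s') n i k)"

lemma fundamental_gap_le_passage:
  assumes mu: "mu \<in> policies A" and d: "\<And>s b. jpol mu s b \<le> jpol mu s (d s)"
  obtains i0 where "\<And>i. fundamental (Pmu P mu) k k - fundamental (Pmu P mu) i k
    \<le> ((\<lambda>x. (1 + x) / step_lb) ^^ passage_steps d i0 k) 0"
proof -
  interpret ergodic_chain "Pmu P mu" by (rule ergodic_chain_Pmu[OF mu])
  have "0 < 1 / real (card (UNIV :: ('i \<Rightarrow> 'act) set))" by (simp add: card_gt_0_iff)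
  then have "jpol mu s (d s) \<noteq> 0" for s using jpol_argmax_ge[OF mu d, of s] by linarith
  then have joint: "d s \<in> joint_actions A" for s using jpol_eq_0[OF mu] by blast
  then have "ergodic (Pmu P (det_policy d))" by (intro ergodic_Pmu det_policy_in_policies)
  then have "\<exists>n. 0 < mpow (\<lambda>s s'. P s (d s) s') n i0 k" for i0
    unfolding ergodic_def Pmu_det_policy by blast
  then have reach: "0 < mpow (\<lambda>s s'. P s (d s) s') (passage_steps d i0 k) i0 k" for i0
    unfolding passage_steps_def by (rule LeastI_ex)
  obtain i0 where max: "\<And>j. fundamental (Pmu P mu) k k - fundamental (Pmu P mu) j k
      \<le> fundamental (Pmu P mu) k k - fundamental (Pmu P mu) i0 k"
    using finite_ex_max[of "\<lambda>j. fundamental (Pmu P mu) k k - fundamental (Pmu P mu) j k"] by blast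
  have "0 \<le> P i (d i) j" for i j using valid joint by (simp add: valid_game_def)
  moreover have "step_lb \<le> 1" by (simp add: step_lb_def)
  ultimately have bound: "fundamental (Pmu P mu) k k - fundamental (Pmu P mu) i0 k
      \<le> ((\<lambda>x. (1 + x) / step_lb) ^^ passage_steps d i0 k) 0"
    using Pmu_ge_step_lb[OF mu d]
    by (intro fundamental_gap_le_iterate[where Md="\<lambda>s s'. P s (d s) s'", OF _ step_lb_pos _ _ reach max])
  have "fundamental (Pmu P mu) k k - fundamental (Pmu P mu) i k
      \<le> ((\<lambda>x. (1 + x) / step_lb) ^^ passage_steps d i0 k) 0" for i
    using max[of i] bound by linarith
  then show thesis by (rule that)
qed

lemma bdd_above_kemeny: "bdd_above (kemeny P ` policies A)"
proof -
  define C where "C = Max (range (\<lambda>(d, i, k). ((\<lambda>x. (1 + x) / step_lb) ^^ passage_steps d i k) 0))"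
  have "kemeny P mu \<le> 1 + real (card (UNIV :: 's set)) * C" if mu: "mu \<in> policies A" for mu
  proof -
    interpret ergodic_chain "Pmu P mu" by (rule ergodic_chain_Pmu[OF mu])
    have "\<forall>s. \<exists>a. \<forall>b. jpol mu s b \<le> jpol mu s a" using finite_ex_max by metis
    then obtain d where d: "\<And>s b. jpol mu s b \<le> jpol mu s (d s)" by metis
    have gap: "fundamental (Pmu P mu) k k - fundamental (Pmu P mu) i k \<le> C" for i k
    proof -
      obtain i0 where "fundamental (Pmu P mu) k k - fundamental (Pmu P mu) i k
          \<le> ((\<lambda>x. (1 + x) / step_lb) ^^ passage_steps d i0 k) 0"
        using fundamental_gap_le_passage[OF mu d] by blast
      also have "\<dots> \<le> C" unfolding C_def by (rule Max_ge) (auto intro: rev_image_eqI[of "(d, i0, k)"])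
      finally show ?thesis .
    qed
    have "kemeny P mu - 1 = (\<Sum>k\<in>UNIV. fundamental (Pmu P mu) k k - fundamental (Pmu P mu) undefined k)"
      unfolding kemeny_def by (rule kemeny_chain_minus_one)
    also have "\<dots> \<le> real (card (UNIV :: 's set)) * C"
      using sum_bounded_above[of UNIV "\<lambda>k. fundamental (Pmu P mu) k k - fundamental (Pmu P mu) undefined k" C]
        gap by simp
    finally show ?thesis by simp
  qed
  then show ?thesis by (intro bdd_aboveI2)
qed

lemma kemeny_le_kemeny_star: "mu \<in> policies A \<Longrightarrow> kemeny P mu \<le> kemeny_star A P"
  unfolding kemeny_star_def by (rule cSUP_upper[OF _ bdd_above_kemeny])

text \<open>The surrogate error is a difference of two stationary averages of the same bounded function.\<close>
lemma surrogate_error_bound: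
  fixes g :: "'s \<Rightarrow> ('i \<Rightarrow> 'act) \<Rightarrow> real"
  assumes mu: "mu \<in> policies A" and mu': "mu' \<in> policies A"
  defines "Ad \<equiv> advantage P mu g (avg P mu g)"
  shows "\<bar>(avg P mu' g - avg P mu g) - surr P mu mu' Ad\<bar>
    \<le> 2 * (kemeny_star A P - 1) * epsmax mu' Ad * DTV P mu' mu"
proof -
  interpret ergodic_chain "Pmu P mu'" by (rule ergodic_chain_Pmu[OF mu'])
  define G where "G s = (\<Sum>a\<in>UNIV. jpol mu' s a * Ad s a)" for s
  define eps where "eps = epsmax mu' Ad"
  have G: "\<bar>G s\<bar> \<le> eps" for s
    unfolding G_def eps_def epsmax_def by (auto intro: Max_ge)
  have "avg P mu' g - avg P mu g = (\<Sum>s\<in>UNIV. stat_dist (Pmu P mu') s * G s)"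
    using performance_difference[OF mu mu'] by (simp add: G_def Ad_def pi_mu_def)
  moreover have "surr P mu mu' Ad = (\<Sum>s\<in>UNIV. pi_mu P mu s * G s)"
    by (simp add: surr_def G_def)
  ultimately have "\<bar>(avg P mu' g - avg P mu g) - surr P mu mu' Ad\<bar>
      = \<bar>(\<Sum>s\<in>UNIV. stat_dist (Pmu P mu') s * G s) - (\<Sum>s\<in>UNIV. pi_mu P mu s * G s)\<bar>"
    by simp
  also have "\<dots> \<le> (\<Sum>j\<in>UNIV. \<bar>\<Sum>i\<in>UNIV. pi_mu P mu i * (Pmu P mu' i j - Pmu P mu i j)\<bar>)
      * ((kemeny P mu' - 1) * eps)"
    unfolding kemeny_def
    by (rule stat_dist_perturbation[OF stochastic_Pmu[OF valid mu] is_stationary_pi_mu[OF mu] G])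
  also have "\<dots> \<le> (2 * DTV P mu' mu) * ((kemeny_star A P - 1) * eps)"
  proof (rule mult_mono)
    have "0 \<le> eps" using G[of undefined] by linarith
    then show "(kemeny P mu' - 1) * eps \<le> (kemeny_star A P - 1) * eps"
      and "0 \<le> (kemeny P mu' - 1) * eps"
      using kemeny_le_kemeny_star[OF mu'] kemeny_chain_ge_1
      by (simp_all add: kemeny_def mult_right_mono)
    show "(\<Sum>j\<in>UNIV. \<bar>\<Sum>i\<in>UNIV. pi_mu P mu i * (Pmu P mu' i j - Pmu P mu i j)\<bar>) \<le> 2 * DTV P mu' mu"
      by (rule sum_abs_pi_mu_Pmu_diff_le_DTV[OF mu mu'])
    moreover have "0 \<le> (\<Sum>j\<in>UNIV. \<bar>\<Sum>i\<in>UNIV. pi_mu P mu i * (Pmu P mu' i j - Pmu P mu i j)\<bar>)"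
      by (simp add: sum_nonneg)
    ultimately show "0 \<le> 2 * DTV P mu' mu" by linarith
  qed
  finally show ?thesis by (simp add: eps_def algebra_simps)
qed

end

lemma max_shifted_sq_le:
  fixes x L d :: real
  assumes "\<bar>x - L\<bar> \<le> d"
  shows "(max 0 (max (L - d) (- L - d)))\<^sup>2 \<le> x\<^sup>2"
proof -
  have "max 0 (max (L - d) (- L - d)) \<le> \<bar>x\<bar>"
    using assms by (auto simp: abs_le_iff max_def)
  from power_mono[OF this, of 2] show ?thesis by simp
qed

theorem theorem6:
  fixes A :: "'i::finite \<Rightarrow> 'act::finite set"
    and P :: "'s::finite \<Rightarrow> ('i \<Rightarrow> 'act) \<Rightarrow> 's \<Rightarrow> real"
    and r :: "'s \<Rightarrow> ('i \<Rightarrow> 'act) \<Rightarrow> real"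
    and beta :: real
    and mu mu' :: "'i \<Rightarrow> 's \<Rightarrow> 'act \<Rightarrow> real"
  assumes game: "valid_game A P"
    and erg: "\<forall>nu\<in>policies A. ergodic (Pmu P nu)"
    and beta: "0 \<le> beta"
    and mu: "mu \<in> policies A" and mu': "mu' \<in> policies A"
  shows "let c = 2 * (kemeny_star A P - 1);
             D = DTV P mu' mu;
             Lf = surr P mu mu' (Adv_f beta P r mu);
             L = surr P mu mu' (Adv P r mu);
             eps_f = epsmax mu' (Adv_f beta P r mu);
             eps_eta = epsmax mu' (Adv P r mu);
             H = max 0 (max (L - c * eps_eta * D) (- L - c * eps_eta * D))
         in Jobj beta P r mu' - Jobj beta P r mu \<ge> Lf - c * eps_f * D + beta * H\<^sup>2"
proof -
  interpret ergodic_team_game A P using game erg by unfold_locales auto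
  let ?c = "2 * (kemeny_star A P - 1)" and ?D = "DTV P mu' mu"
  let ?L = "surr P mu mu' (Adv P r mu)" and ?e = "epsmax mu' (Adv P r mu)"
  let ?de = "eta P r mu' - eta P r mu"
  have J: "\<bar>(Jobj beta P r mu' - beta * ?de\<^sup>2 - Jobj beta P r mu) - surr P mu mu' (Adv_f beta P r mu)\<bar>
      \<le> ?c * epsmax mu' (Adv_f beta P r mu) * ?D"
    using surrogate_error_bound[OF mu mu', of "fmu beta P r mu"] avg_fmu[OF mu', of beta r mu]
      avg_fmu[OF mu, of beta r mu]
    by (simp add: Adv_f_def)
  have "\<bar>?de - ?L\<bar> \<le> ?c * ?e * ?D"
    using surrogate_error_bound[OF mu mu', of r] by (simp add: Adv_def eta_def)
  then have "beta * (max 0 (max (?L - ?c * ?e * ?D) (- ?L - ?c * ?e * ?D)))\<^sup>2 \<le> beta * ?de\<^sup>2"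
    by (intro mult_left_mono[OF max_shifted_sq_le beta])
  with J show ?thesis unfolding Let_def by (simp add: abs_le_iff)
qed

end
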